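(* Let $\tau_1,\tau_2\in S_n$ both avoid the patterns $132$ and $123$. Then $\tau_1\circ\tau_2$ is $1$-almost-increasing.
   Context: Permutations $\pi\in S_n$ are viewed as bijections of $\{1,\dots,n\}$ and written in one-line form $[\pi(1)\cdots\pi(n)]$; $(\tau_1\circ\tau_2)(i)=\tau_1(\tau_2(i))$. A permutation $\pi\in S_n$ is $1$-almost-increasing if for every $i\in\{1,\dots,n\}$ there is at most one $j\le i$ with $\pi_j>i$; equivalently, $\pi$ avoids the patterns $4321$, $4312$, $3421$ and $3412$. *)

theory Defs
  imports "HOL-Combinatorics.Permutations"
begin

text \<open>A permutation of [n] is a function nat => nat with p permutes {1..n}.
  A pattern is given in one-line notation as a list of distinct values 1..k.
  p (on [n]) contains the pattern sigma if there are positions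
  i_1 < ... < i_k in {1..n} whose values are order-isomorphic to sigma.\<close>

definition contains_pattern :: "nat \<Rightarrow> (nat \<Rightarrow> nat) \<Rightarrow> nat list \<Rightarrow> bool" where
  "contains_pattern n p \<sigma> \<longleftrightarrow>
     (\<exists>idx :: nat \<Rightarrow> nat.
        (\<forall>a b. a < b \<and> b < length \<sigma> \<longrightarrow> idx a < idx b) \<and>
        (\<forall>a < length \<sigma>. idx a \<in> {1..n}) \<and>
        (\<forall>a < length \<sigma>. \<forall>b < length \<sigma>. p (idx a) < p (idx b) \<longleftrightarrow> \<sigma> ! a < \<sigma> ! b))"

definition avoids_pattern :: "nat \<Rightarrow> (nat \<Rightarrow> nat) \<Rightarrow> nat list \<Rightarrow> bool" where
  "avoids_pattern n p \<sigma> \<longleftrightarrow> \<not> contains_pattern n p \<sigma>"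

definition almost_increasing_1 :: "nat \<Rightarrow> (nat \<Rightarrow> nat) \<Rightarrow> bool" where
  "almost_increasing_1 n p \<longleftrightarrow> (\<forall>i \<in> {1..n}. card {j \<in> {1..i}. p j > i} \<le> 1)"

end

theory Submission
  imports Defs
begin

text \<open>If \<sigma> avoids 123 and 132, then for any p at most one position after p carries a value
  larger than \<sigma> p. Of the n - \<sigma> p positions carrying larger values, at most p - 1 lie
  before p, hence n \<le> \<sigma> p + p. For the composite at i: the n - i positions k with \<tau>1 k > i
  include all k < n - i by the bound for \<tau>1, while every j \<le> i with \<tau>1 (\<tau>2 j) > i has
  \<tau>2 j \<ge> n - i by the bound for \<tau>2; so there is room for only one such j.\<close>

lemma contains_pattern_3I:
  fixes x y z :: nat
  assumes "1 \<le> i" "i < j" "j < k" "k \<le> n"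
    and "distinct [\<sigma> i, \<sigma> j, \<sigma> k]" "distinct [x, y, z]"
    and "\<sigma> i < \<sigma> j \<longleftrightarrow> x < y" "\<sigma> i < \<sigma> k \<longleftrightarrow> x < z" "\<sigma> j < \<sigma> k \<longleftrightarrow> y < z"
  shows "contains_pattern n \<sigma> [x, y, z]"
proof -
  define idx where "idx a = [i, j, k] ! a" for a
  have less_3: "a < 3 \<longleftrightarrow> a = 0 \<or> a = 1 \<or> a = 2" for a :: nat
    by auto
  have "\<forall>a b. a < b \<and> b < 3 \<longrightarrow> idx a < idx b"
  proof (intro allI impI)
    fix a b :: nat assume "a < b \<and> b < 3"
    then have "a = 0 \<and> b = 1 \<or> a = 0 \<and> b = 2 \<or> a = 1 \<and> b = 2"
      by auto
    then show "idx a < idx b"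
      using assms(2,3) by (auto simp: idx_def)
  qed
  moreover have "\<forall>a < 3. idx a \<in> {1..n}"
    using assms(1-4) by (auto simp: less_3 idx_def)
  moreover have "\<forall>a < 3. \<forall>b < 3. \<sigma> (idx a) < \<sigma> (idx b) \<longleftrightarrow> [x, y, z] ! a < [x, y, z] ! b"
    using assms(5-) by (auto simp: less_3 idx_def)
  moreover have len: "length [x, y, z] = 3"
    by simp
  ultimately show ?thesis
    unfolding contains_pattern_def len by blast
qed

lemma avoids_123_132_no_two_larger_later:
  assumes "inj_on \<sigma> {1..n}"
    and "avoids_pattern n \<sigma> [1,2,3]" "avoids_pattern n \<sigma> [1,3,2]"
    and "1 \<le> p" "p < q1" "q1 < q2" "q2 \<le> n"
  shows "\<not> (\<sigma> p < \<sigma> q1 \<and> \<sigma> p < \<sigma> q2)"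
proof
  assume "\<sigma> p < \<sigma> q1 \<and> \<sigma> p < \<sigma> q2"
  then have larger: "\<sigma> p < \<sigma> q1" "\<sigma> p < \<sigma> q2"
    by auto
  have "\<sigma> q1 \<noteq> \<sigma> q2"
    using inj_onD[OF assms(1)] assms(4-) by fastforce
  then consider "\<sigma> q1 < \<sigma> q2" | "\<sigma> q2 < \<sigma> q1"
    by linarith
  then show False
  proof cases
    case 1
    have "contains_pattern n \<sigma> [1,2,3]"
      by (rule contains_pattern_3I[of p q1 q2]) (use 1 larger assms(4-) in auto)
    then show False
      using assms(2) by (simp add: avoids_pattern_def)
  next
    case 2
    have "contains_pattern n \<sigma> [1,3,2]"
      by (rule contains_pattern_3I[of p q1 q2]) (use 2 larger assms(4-) in auto)
    then show False
      using assms(3) by (simp add: avoids_pattern_def)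
  qed
qed

lemma card_permutes_greater:
  assumes perm: "\<sigma> permutes {1..n}"
  shows "card {q \<in> {1..n}. t < \<sigma> q} = n - t"
proof -
  have "\<sigma> ` {q \<in> {1..n}. t < \<sigma> q} = {t<..n}"
  proof
    show "\<sigma> ` {q \<in> {1..n}. t < \<sigma> q} \<subseteq> {t<..n}"
      using permutes_in_image[OF perm] by fastforce
    show "{t<..n} \<subseteq> \<sigma> ` {q \<in> {1..n}. t < \<sigma> q}"
    proof
      fix v assume v: "v \<in> {t<..n}"
      then have "v \<in> \<sigma> ` {1..n}"
        using permutes_image[OF perm] by auto
      then show "v \<in> \<sigma> ` {q \<in> {1..n}. t < \<sigma> q}"
        using v by auto
    qed
  qed
  moreover have "inj_on \<sigma> {q \<in> {1..n}. t < \<sigma> q}"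
    using permutes_inj_on[OF perm] by (rule inj_on_subset) blast
  ultimately show ?thesis
    by (metis card_image card_greaterThanAtMost)
qed

lemma avoids_123_132_antidiagonal_bound:
  assumes perm: "\<sigma> permutes {1..n}"
    and "avoids_pattern n \<sigma> [1,2,3]" "avoids_pattern n \<sigma> [1,3,2]"
    and p: "p \<in> {1..n}"
  shows "n \<le> \<sigma> p + p"
proof -
  define Q where "Q = {q \<in> {1..n}. \<sigma> p < \<sigma> q}"
  have inj: "inj_on \<sigma> {1..n}"
    using perm permutes_inj_on by blast
  have at_most_one_later: "card (Q \<inter> {p<..}) \<le> 1"
  proof -
    have "q1 = q2" if "q1 \<in> Q \<inter> {p<..}" "q2 \<in> Q \<inter> {p<..}" for q1 q2
      using that avoids_123_132_no_two_larger_later[OF inj assms(2,3)] p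
      by (cases q1 q2 rule: linorder_cases) (auto simp: Q_def)
    then show ?thesis
      by (simp add: Q_def card_le_Suc0_iff_eq)
  qed
  have "card Q \<le> card ({1..<p} \<union> (Q \<inter> {p<..}))"
    by (rule card_mono) (auto simp: Q_def not_less_iff_gr_or_eq)
  also have "\<dots> \<le> card {1..<p} + card (Q \<inter> {p<..})"
    by (rule card_Un_le)
  also have "\<dots> \<le> p"
    using at_most_one_later p by simp
  finally have "card Q \<le> p" .
  moreover have "card Q = n - \<sigma> p"
    unfolding Q_def using perm by (rule card_permutes_greater)
  ultimately show ?thesis
    using p by simp
qed

lemma almost_increasing_1_comp_of_antidiagonal_bound:
  assumes perm1: "\<tau>1 permutes {1..n}" and perm2: "\<tau>2 permutes {1..n}"
    and bound1: "\<And>p. p \<in> {1..n} \<Longrightarrow> n \<le> \<tau>1 p + p"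
    and bound2: "\<And>p. p \<in> {1..n} \<Longrightarrow> n \<le> \<tau>2 p + p"
  shows "almost_increasing_1 n (\<tau>1 \<circ> \<tau>2)"
  unfolding almost_increasing_1_def
proof
  fix i assume i: "i \<in> {1..n}"
  define S where "S = {j \<in> {1..i}. i < (\<tau>1 \<circ> \<tau>2) j}"
  define B where "B = {k \<in> {1..n}. i < \<tau>1 k}"
  have "{1..<n-i} \<subseteq> B"
    using bound1 by (fastforce simp: B_def)
  moreover have "\<tau>2 ` S \<subseteq> B \<inter> {n-i..}"
  proof
    fix k assume "k \<in> \<tau>2 ` S"
    then obtain j where j: "j \<in> {1..i}" "i < \<tau>1 (\<tau>2 j)" and k: "k = \<tau>2 j"
      by (auto simp: S_def)
    have "j \<in> {1..n}"
      using i j(1) by simp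
    moreover from this have "\<tau>2 j \<in> {1..n}"
      using permutes_in_image[OF perm2] by blast
    ultimately show "k \<in> B \<inter> {n-i..}"
      using bound2[of j] j k by (auto simp: B_def)
  qed
  ultimately have "card (\<tau>2 ` S) + card {1..<n-i} \<le> card B"
    by (subst card_Un_disjoint[symmetric]) (auto intro!: card_mono simp: B_def S_def)
  moreover have "card (\<tau>2 ` S) = card S"
    using perm2 by (intro card_image inj_on_subset[OF permutes_inj_on]) auto
  moreover have "card B = n - i"
    unfolding B_def using perm1 by (rule card_permutes_greater)
  ultimately show "card S \<le> 1"
    by simp
qed

theorem proposition7p2:
  fixes n :: nat and \<tau>1 \<tau>2 :: "nat \<Rightarrow> nat"
  assumes "\<tau>1 permutes {1..n}" and "\<tau>2 permutes {1..n}"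
    and "avoids_pattern n \<tau>1 [1,3,2]" and "avoids_pattern n \<tau>1 [1,2,3]"
    and "avoids_pattern n \<tau>2 [1,3,2]" and "avoids_pattern n \<tau>2 [1,2,3]"
  shows "almost_increasing_1 n (\<tau>1 \<circ> \<tau>2)"
  using assms(1,2)
proof (rule almost_increasing_1_comp_of_antidiagonal_bound)
  show "n \<le> \<tau>1 p + p" if "p \<in> {1..n}" for p
    using avoids_123_132_antidiagonal_bound[OF assms(1,4,3) that] .
  show "n \<le> \<tau>2 p + p" if "p \<in> {1..n}" for p
    using avoids_123_132_antidiagonal_bound[OF assms(2,6,5) that] .
qed

end
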